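(* Let $\vec \theta \in \Lambda_0$. There are constants $c_{\{i,j\}}\in \{0, 1, \dots, g-1\}$, for $1 \leq i < j < k$, such that \[\vec \theta \equiv \sum_{1 \leq i < j < k} c_{\{i,j\}} \vec \alpha^{\{i,j\}} \pmod{2 \pi} \] (componentwise). Moreover, this representation of $\vec \theta$ is unique.
   Context: Let $g\ge 2$, $k\ge 2$ be integers, $\mathbb Z_g$ the integers mod $g$, and $d=\binom{k}{2}(g-1)$. Index the coordinates of $\mathbb R^d$ by pairs $(\{i,j\},a)$ with $1\le i<j\le k$ and $a\in\mathbb Z_g\setminus\{0\}$. Define $Z:(\mathbb Z_g)^k\to\mathbb R^d$ by $[Z(\vec x)]_{\{i,j\},a}=1-1/g$ if $x_i-x_j=a$ and $-1/g$ otherwise. Define $\Phi(\vec\theta)=\sum_{\vec x\in(\mathbb Z_g)^k} g^{-k}e^{i\vec\theta\cdot Z(\vec x)}$ for $\vec\theta\in\mathbb R^d$, $\Lambda=\{\vec\theta\in\mathbb R^d: |\Phi(\vec\theta)|=1\}$, and $\Lambda_0=\Lambda\cap[-\pi,\pi)^d$. Let $\mathbbm{1}_{\{i,j\},a}$ be the standard basis vector of $\mathbb R^d$ with a $1$ in coordinate $(\{i,j\},a)$. For $1\le i<j<k$ define \[ \vec \alpha^{\{i,j\}} = \sum_{n=1}^{g-1} \frac{2\pi n}{g} \mathbbm{1}_{\{i,j\},n}+ \sum_{n=1}^{g-1} \frac{2 \pi(g-n)}{g} \mathbbm{1}_{\{i,k\},n} + \sum_{n=1}^{g-1} \frac{2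 \pi n}{g} \mathbbm{1}_{\{j,k\},n},\] where $n$ is an integer in $[1,g-1]$ except in the subscripts, where it denotes the corresponding element of $\mathbb Z_g$. Congruence of vectors mod $2\pi$ means componentwise congruence. *)

theory Defs
  imports "HOL-Analysis.Analysis"
begin

text \<open>Coordinates of R^d are indexed by triples (i, j, a) with 1 \<le> i < j \<le> k and
  a \<in> {1..g-1} (representing the nonzero residues mod g).\<close>

definition idx :: "nat \<Rightarrow> nat \<Rightarrow> (nat \<times> nat \<times> nat) set" where
  "idx g k = {(i, j, a). 1 \<le> i \<and> i < j \<and> j \<le> k \<and> 1 \<le> a \<and> a \<le> g - 1}"

definition configs :: "nat \<Rightarrow> nat \<Rightarrow> (nat \<Rightarrow> nat) set" where
  "configs g k = PiE {1..k} (\<lambda>_. {0..<g})"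

definition Zvec :: "nat \<Rightarrow> nat \<Rightarrow> (nat \<Rightarrow> nat) \<Rightarrow> (nat \<times> nat \<times> nat) \<Rightarrow> real" where
  "Zvec g k x = (\<lambda>(i, j, a). if (i, j, a) \<in> idx g k then
       (if (int (x i) - int (x j)) mod int g = int a then 1 - 1 / real g else - 1 / real g)
     else 0)"

definition dotp :: "nat \<Rightarrow> nat \<Rightarrow> ((nat \<times> nat \<times> nat) \<Rightarrow> real) \<Rightarrow> ((nat \<times> nat \<times> nat) \<Rightarrow> real) \<Rightarrow> real" where
  "dotp g k u v = (\<Sum>c\<in>idx g k. u c * v c)"

definition Phi :: "nat \<Rightarrow> nat \<Rightarrow> ((nat \<times> nat \<times> nat) \<Rightarrow> real) \<Rightarrow> complex" where
  "Phi g k \<theta> = (\<Sum>x\<in>configs g k.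
      complex_of_real (1 / real g ^ k) * exp (\<i> * complex_of_real (dotp g k \<theta> (Zvec g k x))))"

definition Lambda0 :: "nat \<Rightarrow> nat \<Rightarrow> ((nat \<times> nat \<times> nat) \<Rightarrow> real) set" where
  "Lambda0 g k = {\<theta>. \<theta> \<in> extensional (idx g k) \<and>
      (\<forall>c\<in>idx g k. - pi \<le> \<theta> c \<and> \<theta> c < pi) \<and> cmod (Phi g k \<theta>) = 1}"

definition alpha :: "nat \<Rightarrow> nat \<Rightarrow> nat \<times> nat \<Rightarrow> (nat \<times> nat \<times> nat) \<Rightarrow> real" where
  "alpha g k p = (\<lambda>(i', j', a).
     if (i', j', a) \<notin> idx g k then 0
     else if (i', j') = (fst p, snd p) then 2 * pi * real a / real g
     else if (i', j') = (fst p, k) then 2 * pi * (real g - real a) / real g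
     else if (i', j') = (snd p, k) then 2 * pi * real a / real g
     else 0)"

definition pairs :: "nat \<Rightarrow> (nat \<times> nat) set" where
  "pairs k = {(i, j). 1 \<le> i \<and> i < j \<and> j < k}"

definition cong2pi :: "real \<Rightarrow> real \<Rightarrow> bool" where
  "cong2pi x y \<longleftrightarrow> (\<exists>m::int. x - y = 2 * pi * real_of_int m)"

end

theory Submission
  imports Defs "HOL-Library.Real_Mod"
begin

(* If |Phi(theta)| = 1, the unit numbers exp(i theta.Z(x)) averaged by Phi all coincide, so
   sum_{i<j} theta_{ij, x_i - x_j} = 0 (mod 2 pi) for every configuration x.  Configurations
   supported on two coordinates i < j show that n |-> theta_{ij,n} is additive mod 2 pi, hence
   theta_{ij,n} = 2 pi n e_ij / g (mod 2 pi) for some integer e_ij.  Configurations supported on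
   one coordinate show that e, read as edge weights on the complete graph on {1..k}, is a
   circulation mod g.  A circulation mod g is determined by its values on the edges avoiding k,
   and these values are the coefficients c_{ij}.  Uniqueness is read off at the coordinates
   ({i,j}, 1) with j < k. *)

lemma cong2pi_iff_rcong: "cong2pi x y \<longleftrightarrow> [x = y] (rmod (2 * pi))"
proof -
  have "cong2pi x y \<longleftrightarrow> [y = x] (rmod (2 * pi))"
    unfolding cong2pi_def rcong_altdef by (simp add: algebra_simps)
  then show ?thesis by (simp add: rcong_sym_iff)
qed

lemma rcong_sum:
  "(\<And>x. x \<in> A \<Longrightarrow> [f x = g x] (rmod m)) \<Longrightarrow> [(\<Sum>x\<in>A. f x) = (\<Sum>x\<in>A. g x)] (rmod m)"
  by (induction A rule: infinite_finite_induct) (simp_all add: rcong_add)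

lemma rcong_2pi_fraction_iff:
  assumes "g > 0"
  shows "[2 * pi * of_int a / real g = 2 * pi * of_int b / real g] (rmod (2 * pi))
    \<longleftrightarrow> int g dvd b - a"
proof -
  have "2 * pi * of_int b / real g = 2 * pi * of_int a / real g + of_int n * (2 * pi)
      \<longleftrightarrow> b = a + n * int g" for n :: int
  proof -
    have "2 * pi * of_int b / real g = 2 * pi * of_int a / real g + of_int n * (2 * pi)
        \<longleftrightarrow> 2 * pi * real_of_int b = 2 * pi * real_of_int (a + n * int g)"
      using assms by (simp add: field_simps)
    also have "\<dots> \<longleftrightarrow> b = a + n * int g"
      by (simp only: mult_cancel_left of_int_eq_iff) simp
    finally show ?thesis .
  qed
  then have "[2 * pi * of_int a / real g = 2 * pi * of_int b / real g] (rmod (2 * pi))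
      \<longleftrightarrow> (\<exists>n::int. b = a + n * int g)"
    unfolding rcong_altdef by simp
  also have "\<dots> \<longleftrightarrow> int g dvd b - a"
  proof
    assume "\<exists>n. b = a + n * int g"
    then show "int g dvd b - a" by auto
  next
    assume "int g dvd b - a"
    then obtain n where "b - a = int g * n" by (rule dvdE)
    then show "\<exists>n. b = a + n * int g" by (intro exI[of _ n]) (simp add: algebra_simps eq_diff_eq)
  qed
  finally show ?thesis .
qed

lemma unit_vectors_eq_mean_if_norm_sum_eq_card:
  fixes z :: "'a \<Rightarrow> complex"
  assumes "finite A" and unit: "\<And>x. x \<in> A \<Longrightarrow> cmod (z x) = 1"
    and maximal: "cmod (\<Sum>x\<in>A. z x) = card A" and "x \<in> A"
  shows "z x = (\<Sum>x\<in>A. z x) / of_nat (card A)"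
proof -
  define S n where "S = (\<Sum>x\<in>A. z x)" and "n = real (card A)"
  have "n > 0"
    using \<open>finite A\<close> \<open>x \<in> A\<close> by (auto simp: n_def card_gt_0_iff)
  have S_cnj: "S * cnj S = of_real (n * n)"
    using maximal[folded S_def n_def] by (simp add: power2_eq_square flip: complex_norm_square)
  have norm_u: "cmod (z y * cnj S) = n" if "y \<in> A" for y
    using unit[OF that] maximal[folded S_def n_def] by (simp add: norm_mult)
  have "(\<Sum>y\<in>A. n - Re (z y * cnj S)) = (\<Sum>y\<in>A. n) - Re (\<Sum>y\<in>A. z y * cnj S)"
    by (simp only: sum_subtractf Re_sum)
  also have "\<dots> = n * n - Re (S * cnj S)"
    using sum_distrib_right[of z A "cnj S", folded S_def] by (simp add: n_def)
  finally have sum0: "(\<Sum>y\<in>A. n - Re (z y * cnj S)) = 0"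
    by (simp add: S_cnj)
  have nonneg: "0 \<le> n - Re (z y * cnj S)" if "y \<in> A" for y
    using complex_Re_le_cmod[of "z y * cnj S"] norm_u[OF that] by linarith
  have "\<forall>y\<in>A. n - Re (z y * cnj S) = 0"
    using sum_nonneg_eq_0_iff[of A "\<lambda>y. n - Re (z y * cnj S)", OF \<open>finite A\<close> nonneg] sum0 by simp
  then have "n - Re (z x * cnj S) = 0"
    using \<open>x \<in> A\<close> by (rule bspec)
  then have "z x * cnj S \<in> \<real>\<^sub>\<ge>\<^sub>0"
    unfolding norm_eq_Re_iff[symmetric] using norm_u[OF \<open>x \<in> A\<close>] by simp
  then have u: "z x * cnj S = of_real n"
    using norm_u[OF \<open>x \<in> A\<close>] by (simp add: complex_nonneg_Reals_iff complex_eq_iff cmod_eq_Re)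
  have "of_real n * (z x * of_real n) = z x * (S * cnj S)"
    by (simp add: S_cnj)
  also have "\<dots> = (z x * cnj S) * S"
    by (simp only: ac_simps)
  also have "\<dots> = of_real n * S"
    by (simp only: u)
  finally have "z x * of_real n = S"
    using \<open>n > 0\<close> by simp
  then show ?thesis
    using \<open>n > 0\<close> by (simp add: S_def n_def eq_divide_eq)
qed

lemma additive_mod_2pi_is_character:
  fixes \<phi> :: "int \<Rightarrow> real"
  assumes "g > 0"
    and periodic: "\<phi> (int g) = \<phi> 0"
    and additive: "\<And>m n. [\<phi> (m + n) = \<phi> m + \<phi> n] (rmod (2 * pi))"
  obtains e :: int where "\<And>n. [\<phi> n = 2 * pi * of_int (n * e) / real g] (rmod (2 * pi))"
proof -
  have \<phi>_0: "[\<phi> 0 = 0] (rmod (2 * pi))"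
    using additive[of 0 0] rcong_add_left_cancel[of "\<phi> 0" 0 "\<phi> 0"] by (simp add: rcong_sym_iff)
  have linear: "[\<phi> n = of_int n * \<phi> 1] (rmod (2 * pi))" for n
  proof (induction n rule: int_induct[where k = 0])
    case base
    then show ?case using \<phi>_0 by simp
  next
    case (step1 i)
    have "[\<phi> (i + 1) = \<phi> i + \<phi> 1] (rmod (2 * pi))"
      by (rule additive)
    also have "[\<phi> i + \<phi> 1 = of_int i * \<phi> 1 + \<phi> 1] (rmod (2 * pi))"
      using step1.IH by simp
    finally show ?case
      by (simp add: algebra_simps)
  next
    case (step2 i)
    have "[\<phi> (i - 1) + \<phi> 1 = \<phi> i] (rmod (2 * pi))"
      using additive[of "i - 1" 1] by (simp add: rcong_sym_iff)
    also note step2.IH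
    finally have "[\<phi> (i - 1) + \<phi> 1 = of_int (i - 1) * \<phi> 1 + \<phi> 1] (rmod (2 * pi))"
      by (simp add: algebra_simps)
    then show ?case
      by simp
  qed
  have "[0 = of_int (int g) * \<phi> 1] (rmod (2 * pi))"
    using rcong_trans[OF rcong_sym[OF \<phi>_0] linear[of "int g", unfolded periodic]] .
  then obtain e where "real g * \<phi> 1 = of_int e * (2 * pi)"
    by (auto simp: rcong_altdef)
  then have "of_int n * \<phi> 1 = 2 * pi * of_int (n * e) / real g" for n
    using \<open>g > 0\<close> by (simp add: field_simps)
  with linear show ?thesis
    by (intro that[of e]) metis
qed

lemma finite_pairs [simp]: "finite (pairs k)"
  by (rule finite_subset[of _ "{..<k} \<times> {..<k}"]) (auto simp: pairs_def)

definition outflow :: "('v \<times> 'v) set \<Rightarrow> ('v \<times> 'v \<Rightarrow> int) \<Rightarrow> 'v \<Rightarrow> int" where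
  "outflow E e v = (\<Sum>(i, j)\<in>E. (of_bool (i = v) - of_bool (j = v)) * e (i, j))"

lemma outflow_dvd_diff:
  assumes "\<And>p. p \<in> E \<Longrightarrow> m dvd e p - e' p"
  shows "m dvd outflow E e v - outflow E e' v"
proof -
  have "outflow E e v - outflow E e' v
      = (\<Sum>(i, j)\<in>E. (of_bool (i = v) - of_bool (j = v)) * (e (i, j) - e' (i, j)))"
    by (simp add: outflow_def case_prod_beta algebra_simps flip: sum_subtractf)
  also have "m dvd \<dots>"
    using assms by (auto intro!: dvd_sum dvd_mult)
  finally show ?thesis .
qed

lemma outflow_pairs_Suc:
  assumes "1 \<le> v" and "v < k"
  shows "outflow (pairs (Suc k)) e v = outflow (pairs k) e v + e (v, k)"
proof -
  have split: "pairs (Suc k) = pairs k \<union> (\<lambda>q. (q, k)) ` {1..<k}"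
    and disjoint: "pairs k \<inter> (\<lambda>q. (q, k)) ` {1..<k} = {}"
    by (auto simp: pairs_def)
  have "(\<Sum>(i, j)\<in>(\<lambda>q. (q, k)) ` {1..<k}. (of_bool (i = v) - of_bool (j = v)) * e (i, j))
      = (\<Sum>q\<in>{1..<k}. of_bool (q = v) * e (q, k))"
    using assms by (subst sum.reindex) (auto simp: inj_on_def intro: sum.cong)
  also have "\<dots> = (\<Sum>q\<in>{1..<k}. if q = v then e (q, k) else 0)"
    by (intro sum.cong) auto
  also have "\<dots> = e (v, k)"
    using assms by simp
  finally show ?thesis
    unfolding outflow_def split using disjoint by (simp add: sum.union_disjoint)
qed

lemma mem_idx_iff: "(i, j, a) \<in> idx g k \<longleftrightarrow> (i, j) \<in> pairs (Suc k) \<and> a \<in> {1..<g}"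
  by (auto simp: idx_def pairs_def)

lemma sum_idx:
  "(\<Sum>t\<in>idx g k. f t) = (\<Sum>(i, j)\<in>pairs (Suc k). \<Sum>a\<in>{1..<g}. f (i, j, a))"
proof -
  have "bij_betw (\<lambda>((i, j), a). (i, j, a)) (SIGMA p:pairs (Suc k). {1..<g}) (idx g k)"
    by (rule bij_betwI[where g = "\<lambda>(i, j, a). ((i, j), a)"]) (auto simp: mem_idx_iff)
  then have "(\<Sum>t\<in>idx g k. f t) = (\<Sum>((i, j), a)\<in>(SIGMA p:pairs (Suc k). {1..<g}). f (i, j, a))"
    by (rule sum.reindex_bij_betw[symmetric, THEN trans]) (simp add: case_prod_beta)
  also have "\<dots> = (\<Sum>(i, j)\<in>pairs (Suc k). \<Sum>a\<in>{1..<g}. f (i, j, a))"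
    by (subst sum.Sigma[symmetric]) (auto simp: case_prod_beta)
  finally show ?thesis .
qed

(* theta_{ij, n mod g}; the residue 0 is not a coordinate and contributes 0.  Note that
   pairs (Suc k) is the set of all pairs i < j <= k. *)
definition pair_angle :: "nat \<Rightarrow> (nat \<times> nat \<times> nat \<Rightarrow> real) \<Rightarrow> nat \<Rightarrow> nat \<Rightarrow> int \<Rightarrow> real" where
  "pair_angle g \<theta> i j n = (\<Sum>a\<in>{1..<g}. \<theta> (i, j, a) * of_bool (n mod int g = int a))"

definition pair_phase :: "nat \<Rightarrow> nat \<Rightarrow> (nat \<times> nat \<times> nat \<Rightarrow> real) \<Rightarrow> (nat \<Rightarrow> int) \<Rightarrow> real" where
  "pair_phase g k \<theta> h = (\<Sum>(i, j)\<in>pairs (Suc k). pair_angle g \<theta> i j (h i - h j))"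

lemma pair_angle_mod [simp]: "pair_angle g \<theta> i j (n mod int g) = pair_angle g \<theta> i j n"
  by (simp add: pair_angle_def)

lemma pair_angle_add_modulus [simp]: "pair_angle g \<theta> i j (n + int g) = pair_angle g \<theta> i j n"
  by (simp add: pair_angle_def)

lemma pair_angle_0 [simp]: "pair_angle g \<theta> i j 0 = 0"
  by (simp add: pair_angle_def)

lemma pair_angle_residue:
  assumes "a \<in> {1..<g}"
  shows "pair_angle g \<theta> i j (int a) = \<theta> (i, j, a)"
proof -
  have "pair_angle g \<theta> i j (int a) = (\<Sum>b\<in>{1..<g}. if b = a then \<theta> (i, j, b) else 0)"
    unfolding pair_angle_def using assms by (intro sum.cong) auto
  then show ?thesis
    using assms by simp
qed

lemma dotp_Zvec:
  "dotp g k \<theta> (Zvec g k x) = pair_phase g k \<theta> (\<lambda>m. int (x m)) - (\<Sum>t\<in>idx g k. \<theta> t) / real g"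
proof -
  have "dotp g k \<theta> (Zvec g k x) = (\<Sum>(i, j, a)\<in>idx g k.
      \<theta> (i, j, a) * of_bool ((int (x i) - int (x j)) mod int g = int a) - \<theta> (i, j, a) / real g)"
    unfolding dotp_def Zvec_def by (intro sum.cong) (auto simp: algebra_simps)
  also have "\<dots> = pair_phase g k \<theta> (\<lambda>m. int (x m)) - (\<Sum>t\<in>idx g k. \<theta> t) / real g"
    by (simp add: case_prod_beta sum_subtractf sum_divide_distrib sum_idx pair_phase_def pair_angle_def)
  finally show ?thesis .
qed

lemma pair_phase_cong:
  assumes "\<And>m. m \<in> {1..k} \<Longrightarrow> h m mod int g = h' m mod int g"
  shows "pair_phase g k \<theta> h = pair_phase g k \<theta> h'"
  unfolding pair_phase_def
proof (rule sum.cong[OF refl], clarify)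
  fix i j assume "(i, j) \<in> pairs (Suc k)"
  then have "(h i - h j) mod int g = (h' i - h' j) mod int g"
    using assms by (auto simp: pairs_def intro: mod_diff_cong)
  then show "pair_angle g \<theta> i j (h i - h j) = pair_angle g \<theta> i j (h' i - h' j)"
    by (metis pair_angle_mod)
qed

lemma pair_phase_0 [simp]: "pair_phase g k \<theta> (\<lambda>_. 0) = 0"
  by (simp add: pair_phase_def)

lemma Lambda0_pair_phase:
  assumes "g > 0" and "\<theta> \<in> Lambda0 g k"
  shows "[pair_phase g k \<theta> h = 0] (rmod (2 * pi))"
proof -
  define z where "z x = cis (dotp g k \<theta> (Zvec g k x))" for x
  have fin: "finite (configs g k)" and card: "card (configs g k) = g ^ k"
    by (simp_all add: configs_def finite_PiE card_PiE)
  have "Phi g k \<theta> = (\<Sum>x\<in>configs g k. z x) / of_nat (g ^ k)"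
    by (simp add: Phi_def z_def cis_conv_exp sum_divide_distrib)
  then have maximal: "cmod (\<Sum>x\<in>configs g k. z x) = card (configs g k)"
    using assms by (simp add: Lambda0_def card norm_divide norm_power)
  have z_mean: "z x = (\<Sum>x\<in>configs g k. z x) / of_nat (card (configs g k))"
    if "x \<in> configs g k" for x
    by (rule unit_vectors_eq_mean_if_norm_sum_eq_card[OF fin _ maximal that]) (simp add: z_def)
  define x0 xh :: "nat \<Rightarrow> nat" where "x0 = restrict (\<lambda>_. 0) {1..k}"
    and "xh = restrict (\<lambda>m. nat (h m mod int g)) {1..k}"
  have "x0 \<in> configs g k" "xh \<in> configs g k"
    using assms(1) by (auto simp: x0_def xh_def configs_def nat_less_iff)
  then have "z xh = z x0"
    by (simp only: z_mean)
  then have "[dotp g k \<theta> (Zvec g k xh) = dotp g k \<theta> (Zvec g k x0)] (rmod (2 * pi))"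
    by (simp add: z_def cis_eq_iff)
  moreover have "pair_phase g k \<theta> (\<lambda>m. int (xh m)) = pair_phase g k \<theta> h"
    by (rule pair_phase_cong) (simp add: xh_def assms(1))
  moreover have "pair_phase g k \<theta> (\<lambda>m. int (x0 m)) = 0"
    using pair_phase_cong[of k "\<lambda>m. int (x0 m)" g "\<lambda>_. 0"] by (simp add: x0_def)
  ultimately have "[pair_phase g k \<theta> h - (\<Sum>t\<in>idx g k. \<theta> t) / real g
      = 0 - (\<Sum>t\<in>idx g k. \<theta> t) / real g] (rmod (2 * pi))"
    by (simp add: dotp_Zvec)
  then show ?thesis
    by (simp only: rcong_diff_right_cancel)
qed

lemma pair_phase_mixed_difference:
  assumes "(i, j) \<in> pairs (Suc k)"
  defines "h a b \<equiv> (\<lambda>m. if m = i then a else if m = j then b else 0)"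
  shows "pair_phase g k \<theta> (h a b) - pair_phase g k \<theta> (h a 0) - pair_phase g k \<theta> (h 0 b)
      + pair_phase g k \<theta> (h 0 0)
    = pair_angle g \<theta> i j (a - b) - pair_angle g \<theta> i j a - pair_angle g \<theta> i j (- b)"
proof -
  define T where "T f p q = pair_angle g \<theta> p q (f p - f q)" for f p q
  have "i < j"
    using assms(1) by (simp add: pairs_def)
  have other_pairs: "T (h a b) p q - T (h a 0) p q - T (h 0 b) p q + T (h 0 0) p q = 0"
    if "(p, q) \<in> pairs (Suc k)" "(p, q) \<noteq> (i, j)" for p q
  proof -
    from that \<open>i < j\<close> consider "p \<noteq> j" "q \<noteq> j" | "p \<noteq> i" "q \<noteq> i"
      by (cases "q = i") (auto simp: pairs_def)
    then show ?thesis
      by cases (auto simp: T_def h_def)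
  qed
  have "pair_phase g k \<theta> (h a b) - pair_phase g k \<theta> (h a 0) - pair_phase g k \<theta> (h 0 b)
      + pair_phase g k \<theta> (h 0 0)
    = (\<Sum>(p, q)\<in>pairs (Suc k). T (h a b) p q - T (h a 0) p q - T (h 0 b) p q + T (h 0 0) p q)"
    by (simp add: pair_phase_def T_def sum_subtractf sum.distrib case_prod_beta)
  also have "\<dots> = T (h a b) i j - T (h a 0) i j - T (h 0 b) i j + T (h 0 0) i j"
    using assms(1) other_pairs by (subst sum.remove[of _ "(i, j)"]) (auto intro!: sum.neutral)
  also have "\<dots> = pair_angle g \<theta> i j (a - b) - pair_angle g \<theta> i j a - pair_angle g \<theta> i j (- b)"
    using \<open>i < j\<close> by (simp add: T_def h_def)
  finally show ?thesis .
qed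

lemma Lambda0_pair_angle_character:
  assumes "g > 0" and "\<theta> \<in> Lambda0 g k" and "(i, j) \<in> pairs (Suc k)"
  obtains e :: int where "\<And>n. [pair_angle g \<theta> i j n = 2 * pi * of_int (n * e) / real g] (rmod (2 * pi))"
proof -
  let ?\<phi> = "pair_angle g \<theta> i j"
  have "[?\<phi> (m + n) = ?\<phi> m + ?\<phi> n] (rmod (2 * pi))" for m n
  proof -
    define h where "h a b = (\<lambda>x. if x = i then a else if x = j then b else (0::int))" for a b
    have "[pair_phase g k \<theta> (h m (- n)) - pair_phase g k \<theta> (h m 0) - pair_phase g k \<theta> (h 0 (- n))
        + pair_phase g k \<theta> (h 0 0) = 0 - 0 - 0 + 0] (rmod (2 * pi))"
      using assms(1,2) by (intro rcong_add rcong_diff Lambda0_pair_phase)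
    then have "[?\<phi> (m + n) - ?\<phi> m - ?\<phi> n = ?\<phi> m + ?\<phi> n - ?\<phi> m - ?\<phi> n] (rmod (2 * pi))"
      using pair_phase_mixed_difference[OF assms(3), of g \<theta> m "- n"] by (simp add: h_def)
    then show ?thesis
      by (simp only: diff_diff_eq rcong_diff_right_cancel)
  qed
  moreover have "?\<phi> (int g) = ?\<phi> 0"
    using pair_angle_add_modulus[of g \<theta> i j 0] by simp
  ultimately show ?thesis
    using additive_mod_2pi_is_character[OF assms(1)] that by blast
qed

lemma pair_phase_of_characters:
  assumes "\<And>i j n. (i, j) \<in> pairs (Suc k) \<Longrightarrow>
    [pair_angle g \<theta> i j n = 2 * pi * of_int (n * e (i, j)) / real g] (rmod (2 * pi))"
  shows "[pair_phase g k \<theta> h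
    = 2 * pi * of_int (\<Sum>(i, j)\<in>pairs (Suc k). (h i - h j) * e (i, j)) / real g] (rmod (2 * pi))"
proof -
  have "[pair_phase g k \<theta> h
      = (\<Sum>(i, j)\<in>pairs (Suc k). 2 * pi * of_int ((h i - h j) * e (i, j)) / real g)] (rmod (2 * pi))"
    unfolding pair_phase_def
  proof (rule rcong_sum, clarify)
    fix i j assume "(i, j) \<in> pairs (Suc k)"
    then show "[pair_angle g \<theta> i j (h i - h j) = 2 * pi * of_int ((h i - h j) * e (i, j)) / real g]
        (rmod (2 * pi))"
      by (rule assms)
  qed
  also have "(\<Sum>(i, j)\<in>pairs (Suc k). 2 * pi * of_int ((h i - h j) * e (i, j)) / real g)
      = 2 * pi * of_int (\<Sum>(i, j)\<in>pairs (Suc k). (h i - h j) * e (i, j)) / real g"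
    by (simp add: case_prod_beta of_int_sum sum_distrib_left sum_divide_distrib)
  finally show ?thesis .
qed

lemma Lambda0_outflow_dvd:
  assumes "g > 0" and "\<theta> \<in> Lambda0 g k"
    and "\<And>i j n. (i, j) \<in> pairs (Suc k) \<Longrightarrow>
      [pair_angle g \<theta> i j n = 2 * pi * of_int (n * e (i, j)) / real g] (rmod (2 * pi))"
  shows "int g dvd outflow (pairs (Suc k)) e v"
proof -
  let ?h = "\<lambda>m. of_bool (m = v) :: int"
  have "[2 * pi * of_int 0 / real g = pair_phase g k \<theta> ?h] (rmod (2 * pi))"
    using Lambda0_pair_phase[OF assms(1,2)] by (simp add: rcong_sym_iff)
  also have "[pair_phase g k \<theta> ?h = 2 * pi * of_int (outflow (pairs (Suc k)) e v) / real g] (rmod (2 * pi))"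
    using pair_phase_of_characters[OF assms(3)] by (simp add: outflow_def)
  finally have "int g dvd outflow (pairs (Suc k)) e v - 0"
    unfolding rcong_2pi_fraction_iff[OF assms(1)] .
  then show ?thesis
    by simp
qed

lemma sum_alpha_below:
  assumes "(i, j, a) \<in> idx g k" and "j < k"
  shows "(\<Sum>p\<in>pairs k. real (c p) * alpha g k p (i, j, a))
    = 2 * pi * of_int (int a * int (c (i, j))) / real g"
proof -
  have "(i, j) \<in> pairs k"
    using assms by (simp add: mem_idx_iff pairs_def)
  have "(\<Sum>p\<in>pairs k. real (c p) * alpha g k p (i, j, a))
      = (\<Sum>p\<in>pairs k. if p = (i, j) then real (c (i, j)) * (2 * pi * real a / real g) else 0)"
    using assms by (intro sum.cong) (auto simp: alpha_def)
  then show ?thesis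
    using \<open>(i, j) \<in> pairs k\<close> by simp
qed

lemma sum_alpha_top:
  assumes "(i, k, a) \<in> idx g k"
  shows "[(\<Sum>p\<in>pairs k. real (c p) * alpha g k p (i, k, a))
    = 2 * pi * of_int (- int a * outflow (pairs k) (\<lambda>p. int (c p)) i) / real g] (rmod (2 * pi))"
proof -
  define X Y where "X p = of_bool (fst p = i) * int (c p)"
    and "Y p = - int a * ((of_bool (fst p = i) - of_bool (snd p = i)) * int (c p))" for p
  have "g > 0"
    using assms by (simp add: mem_idx_iff)
  have "(\<Sum>p\<in>pairs k. real (c p) * alpha g k p (i, k, a))
      = (\<Sum>p\<in>pairs k. 2 * pi * of_int (X p) + 2 * pi * of_int (Y p) / real g)"
    using assms \<open>g > 0\<close>
    by (intro sum.cong) (auto simp: X_def Y_def alpha_def pairs_def mem_idx_iff field_simps)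
  also have "\<dots> = of_int (sum X (pairs k)) * (2 * pi) + 2 * pi * of_int (sum Y (pairs k)) / real g"
    by (simp add: sum.distrib of_int_sum sum_distrib_left sum_divide_distrib mult_ac)
  also have "sum Y (pairs k) = - int a * outflow (pairs k) (\<lambda>p. int (c p)) i"
    by (simp add: Y_def outflow_def case_prod_beta sum_distrib_left)
  finally show ?thesis
    unfolding rcong_altdef by (intro exI[of _ "- sum X (pairs k)"]) simp
qed

lemma sum_alpha_circulation:
  assumes circulation: "\<And>v. int g dvd outflow (pairs (Suc k)) e v"
    and c: "\<And>p. p \<in> pairs k \<Longrightarrow> int g dvd int (c p) - e p"
    and t: "(i, j, a) \<in> idx g k"
  shows "[(\<Sum>p\<in>pairs k. real (c p) * alpha g k p (i, j, a))
    = 2 * pi * of_int (int a * e (i, j)) / real g] (rmod (2 * pi))"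
proof -
  have "g > 0" "1 \<le> i" "i < j" "j \<le> k"
    using t by (auto simp: mem_idx_iff pairs_def)
  show ?thesis
  proof (cases "j < k")
    case True
    then have "(i, j) \<in> pairs k"
      using \<open>1 \<le> i\<close> \<open>i < j\<close> by (simp add: pairs_def)
    then have "int g dvd int a * (int (c (i, j)) - e (i, j))"
      by (intro dvd_mult c)
    then have "int g dvd int a * int (c (i, j)) - int a * e (i, j)"
      by (simp add: right_diff_distrib)
    then show ?thesis
      unfolding sum_alpha_below[OF t True] rcong_2pi_fraction_iff[OF \<open>g > 0\<close>]
      by (simp add: dvd_diff_commute)
  next
    case False
    with \<open>j \<le> k\<close> have "j = k" by simp
    have "int g dvd outflow (pairs (Suc k)) e i
        + (outflow (pairs k) (\<lambda>p. int (c p)) i - outflow (pairs k) e i)"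
      using circulation outflow_dvd_diff[OF c] by (rule dvd_add)
    also have "\<dots> = e (i, k) + outflow (pairs k) (\<lambda>p. int (c p)) i"
      using \<open>1 \<le> i\<close> \<open>i < j\<close> \<open>j = k\<close> by (simp add: outflow_pairs_Suc)
    finally have "int g dvd int a * (e (i, k) + outflow (pairs k) (\<lambda>p. int (c p)) i)"
      by (rule dvd_mult)
    then have "int g dvd int a * e (i, k) - (- int a * outflow (pairs k) (\<lambda>p. int (c p)) i)"
      by (simp add: algebra_simps)
    then have "[2 * pi * of_int (- int a * outflow (pairs k) (\<lambda>p. int (c p)) i) / real g
        = 2 * pi * of_int (int a * e (i, k)) / real g] (rmod (2 * pi))"
      unfolding rcong_2pi_fraction_iff[OF \<open>g > 0\<close>] .
    with sum_alpha_top[OF t[unfolded \<open>j = k\<close>]] show ?thesis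
      unfolding \<open>j = k\<close> by (rule rcong_trans)
  qed
qed

lemma alpha_representation_unique:
  assumes c: "c \<in> PiE (pairs k) (\<lambda>_. {0..<g})" and c': "c' \<in> PiE (pairs k) (\<lambda>_. {0..<g})"
    and "\<And>t. t \<in> idx g k \<Longrightarrow> [\<theta> t = (\<Sum>p\<in>pairs k. real (c p) * alpha g k p t)] (rmod (2 * pi))"
    and "\<And>t. t \<in> idx g k \<Longrightarrow> [\<theta> t = (\<Sum>p\<in>pairs k. real (c' p) * alpha g k p t)] (rmod (2 * pi))"
  shows "c = c'"
proof (rule PiE_ext[OF c c'])
  have same: "[(\<Sum>p\<in>pairs k. real (c p) * alpha g k p t) = (\<Sum>p\<in>pairs k. real (c' p) * alpha g k p t)]
      (rmod (2 * pi))" if "t \<in> idx g k" for t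
    using rcong_trans[OF rcong_sym assms(4)[OF that]] assms(3)[OF that] .
  fix p assume "p \<in> pairs k"
  then obtain i j where p: "p = (i, j)" "1 \<le> i" "i < j" "j < k"
    by (auto simp: pairs_def)
  have bounds: "c p < g" "c' p < g"
    using \<open>p \<in> pairs k\<close> c c' by auto
  show "c p = c' p"
  proof (cases "g = 1")
    case True
    with bounds show ?thesis by simp
  next
    case False
    with bounds have t: "(i, j, 1) \<in> idx g k"
      using p by (simp add: mem_idx_iff pairs_def)
    have "int g dvd int 1 * int (c' p) - int 1 * int (c p)"
      using same[OF t] bounds unfolding sum_alpha_below[OF t \<open>j < k\<close>] p(1)
      by (simp only: rcong_2pi_fraction_iff)
    then have "int (c' p) mod int g = int (c p) mod int g"
      by (simp add: mod_eq_dvd_iff)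
    with bounds show ?thesis
      by simp
  qed
qed

lemma Lambda0_pair_characters:
  assumes "g > 0" and "\<theta> \<in> Lambda0 g k"
  obtains e :: "nat \<times> nat \<Rightarrow> int" where "\<And>i j n. (i, j) \<in> pairs (Suc k) \<Longrightarrow>
    [pair_angle g \<theta> i j n = 2 * pi * of_int (n * e (i, j)) / real g] (rmod (2 * pi))"
proof -
  have "\<forall>p\<in>pairs (Suc k). \<exists>e. \<forall>n.
      [pair_angle g \<theta> (fst p) (snd p) n = 2 * pi * of_int (n * e) / real g] (rmod (2 * pi))"
  proof
    fix p assume "p \<in> pairs (Suc k)"
    then have "(fst p, snd p) \<in> pairs (Suc k)"
      by simp
    from Lambda0_pair_angle_character[OF assms this] show "\<exists>e. \<forall>n.
        [pair_angle g \<theta> (fst p) (snd p) n = 2 * pi * of_int (n * e) / real g] (rmod (2 * pi))"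
      by blast
  qed
  from bchoice[OF this] obtain e where "\<forall>p\<in>pairs (Suc k). \<forall>n.
      [pair_angle g \<theta> (fst p) (snd p) n = 2 * pi * of_int (n * e p) / real g] (rmod (2 * pi))"
    by blast
  then show ?thesis
    by (intro that[of e]) fastforce
qed

lemma Lambda0_alpha_representation:
  assumes "g > 0" and "\<theta> \<in> Lambda0 g k"
  obtains c where "c \<in> PiE (pairs k) (\<lambda>_. {0..<g})"
    and "\<And>t. t \<in> idx g k \<Longrightarrow> [\<theta> t = (\<Sum>p\<in>pairs k. real (c p) * alpha g k p t)] (rmod (2 * pi))"
proof -
  obtain e where e: "\<And>i j n. (i, j) \<in> pairs (Suc k) \<Longrightarrow>
      [pair_angle g \<theta> i j n = 2 * pi * of_int (n * e (i, j)) / real g] (rmod (2 * pi))"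
    using Lambda0_pair_characters[OF assms] by blast
  have circulation: "int g dvd outflow (pairs (Suc k)) e v" for v
    by (rule Lambda0_outflow_dvd[OF assms]) (rule e)
  define c where "c = restrict (\<lambda>p. nat (e p mod int g)) (pairs k)"
  have c_mem: "c \<in> PiE (pairs k) (\<lambda>_. {0..<g})"
    using \<open>g > 0\<close> by (simp add: c_def nat_less_iff)
  have c_cong: "int g dvd int (c p) - e p" if "p \<in> pairs k" for p
    using that \<open>g > 0\<close> mod_eq_dvd_iff[of "e p mod int g" "int g" "e p"] by (simp add: c_def)
  have "[\<theta> t = (\<Sum>p\<in>pairs k. real (c p) * alpha g k p t)] (rmod (2 * pi))"
    if "t \<in> idx g k" for t
  proof -
    obtain i j a where t: "t = (i, j, a)" "(i, j) \<in> pairs (Suc k)" "a \<in> {1..<g}"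
      using \<open>t \<in> idx g k\<close> by (cases t) (auto simp: mem_idx_iff)
    have "\<theta> t = pair_angle g \<theta> i j (int a)"
      using t by (simp add: pair_angle_residue)
    also have "[pair_angle g \<theta> i j (int a) = 2 * pi * of_int (int a * e (i, j)) / real g] (rmod (2 * pi))"
      using e[OF t(2)] .
    also have "[2 * pi * of_int (int a * e (i, j)) / real g
        = (\<Sum>p\<in>pairs k. real (c p) * alpha g k p t)] (rmod (2 * pi))"
      using circulation c_cong \<open>t \<in> idx g k\<close>
      unfolding t(1) by (rule rcong_sym[OF sum_alpha_circulation])
    finally show ?thesis .
  qed
  with c_mem show ?thesis
    by (rule that)
qed

theorem lemma2p9:
  fixes g k :: nat and \<theta> :: "(nat \<times> nat \<times> nat) \<Rightarrow> real"
  assumes "g \<ge> 2" and "k \<ge> 2" and "\<theta> \<in> Lambda0 g k"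
  shows "\<exists>!c. c \<in> PiE (pairs k) (\<lambda>_. {0..<g}) \<and>
     (\<forall>t\<in>idx g k. cong2pi (\<theta> t) (\<Sum>p\<in>pairs k. real (c p) * alpha g k p t))"
  unfolding cong2pi_iff_rcong
proof -
  from assms(1) have "g > 0"
    by simp
  obtain c where c: "c \<in> PiE (pairs k) (\<lambda>_. {0..<g})"
    and represents: "\<And>t. t \<in> idx g k \<Longrightarrow> [\<theta> t = (\<Sum>p\<in>pairs k. real (c p) * alpha g k p t)] (rmod (2 * pi))"
    using Lambda0_alpha_representation[OF \<open>g > 0\<close> assms(3)] by blast
  show "\<exists>!c. c \<in> PiE (pairs k) (\<lambda>_. {0..<g}) \<and>
      (\<forall>t\<in>idx g k. [\<theta> t = (\<Sum>p\<in>pairs k. real (c p) * alpha g k p t)] (rmod (2 * pi)))"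
  proof (rule ex1I[of _ c])
    fix c' assume "c' \<in> PiE (pairs k) (\<lambda>_. {0..<g}) \<and>
      (\<forall>t\<in>idx g k. [\<theta> t = (\<Sum>p\<in>pairs k. real (c' p) * alpha g k p t)] (rmod (2 * pi)))"
    with c represents show "c' = c"
      by (intro alpha_representation_unique[of c' k g c \<theta>]) auto
  qed (use c represents in blast)
qed

end
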